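(* Let $\psi\in C^1(\mathbb{R})$ satisfy: $\psi(0)=1$, $\psi$ is even, there exist $C>0$ and $\delta>1$ with $|\psi(x)|+|x\psi'(x)|\leq C\langle x\rangle^{-\delta}$ for all $x\in\mathbb{R}$, and $A_\psi:=\int_{\mathbb{R}}\psi(x)\,\mathrm{d}x\neq 0$. Let $h(x)=\psi(x)+x\psi'(x)$ and $C_h=\int_{\mathbb{R}}|h(x)|^2\,\mathrm{d}x$. Let $\mu$ be a probability measure on $\mathbb{R}$ and $(c,d)$ a bounded interval. Then $$\lim_{a\downarrow0}a\int_c^d|W_h(\mu)(b,a)|^2\,\mathrm{d}b=C_h\Big(\sum_{x\in(c,d)}\mu(\{x\})^2+\tfrac12\big(\mu(\{c\})^2+\mu(\{d\})^2\big)\Big).$$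
   Context: $\langle x\rangle=(1+x^2)^{1/2}$. The continuous wavelet transform of $\mu$ is $W_h(\mu)(b,a)=\frac1a\int_{-\infty}^{\infty}h((b-y)/a)\,\mathrm{d}\mu(y)$ for $b\in\mathbb{R}$, $a>0$. *)

theory Defs
  imports "HOL-Probability.Probability"
begin

definition jbracket :: "real \<Rightarrow> real" where
  "jbracket x = sqrt (1 + x\<^sup>2)"

definition wavelet_transform :: "(real \<Rightarrow> real) \<Rightarrow> real measure \<Rightarrow> real \<Rightarrow> real \<Rightarrow> real" where
  "wavelet_transform h M b a = (1 / a) * (\<integral>y. h ((b - y) / a) \<partial>M)"

end

(*
  Put t = 1/a. Expanding the square of the transform as an integral over M x M (Fubini) and
  substituting b = y + u/t gives

    a * int_c^d W_h(b,a)^2 db = int int K_t(y,z) dM(y) dM(z),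
    K_t(y,z) = int 1_(c,d)(y + u/t) h(u) h(u + t(y - z)) du,

  with |K_t| <= sup|h| * int|h|. Off the diagonal K_t(y,z) -> 0 because h vanishes at infinity.
  On the diagonal the indicator tends to 1 inside (c,d), to 0 outside, and to the indicator of a
  half line at c and at d, where evenness of h leaves exactly C_h / 2. By dominated convergence on
  M x M only the diagonal survives, and the diagonal of M x M is carried by the atoms of M.
*)

theory Submission
  imports Defs "HOL-Real_Asymp.Real_Asymp"
begin

lemma jbracket_ge_abs: "\<bar>x\<bar> \<le> jbracket x"
  unfolding jbracket_def by (rule real_le_rsqrt) simp

lemma jbracket_ge_one: "1 \<le> jbracket x"
  unfolding jbracket_def by simp

lemma jbracket_powr_neg_le_one: "0 \<le> e \<Longrightarrow> jbracket x powr (- e) \<le> 1"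
  using ge_one_powr_ge_zero[OF jbracket_ge_one, of e x] by (simp add: powr_minus_divide divide_le_eq)

lemma jbracket_powr_neg_le_abs_powr: "0 \<le> e \<Longrightarrow> x \<noteq> 0 \<Longrightarrow> jbracket x powr (- e) \<le> \<bar>x\<bar> powr (- e)"
  using jbracket_ge_abs by (intro powr_mono2') auto

lemma tendsto_jbracket_powr_neg: "0 < e \<Longrightarrow> ((\<lambda>x. jbracket x powr (- e)) \<longlongrightarrow> 0) at_infinity"
proof (rule Lim_null_comparison)
  assume "0 < e"
  have "filterlim (\<lambda>x::real. norm x) at_top at_infinity"
    by (rule filterlim_at_infinity_imp_norm_at_top[OF filterlim_ident])
  with \<open>0 < e\<close> show "((\<lambda>x::real. \<bar>x\<bar> powr (- e)) \<longlongrightarrow> 0) at_infinity"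
    by (intro tendsto_neg_powr) auto
  have "eventually (\<lambda>x::real. x \<noteq> 0) at_infinity"
    unfolding eventually_at_infinity by (auto intro: exI[of _ 1])
  then show "eventually (\<lambda>x. norm (jbracket x powr (- e)) \<le> \<bar>x\<bar> powr (- e)) at_infinity"
    by eventually_elim (use \<open>0 < e\<close> jbracket_powr_neg_le_abs_powr in auto)
qed

lemma integrable_jbracket_powr_neg:
  assumes "1 < e"
  shows "integrable lborel (\<lambda>x. jbracket x powr (- e))"
proof -
  have "(\<lambda>x. x powr (- e)) integrable_on {1..}"
    using has_integral_powr_to_inf[of "- e" 1] assms by (auto simp: integrable_on_def)
  then have "(\<lambda>x. x powr (- e)) absolutely_integrable_on {1..}"
    by (rule nonnegative_absolutely_integrable_1) simp
  then have right: "integrable lborel (\<lambda>x. indicator {1..} x * x powr (- e))"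
    unfolding set_integrable_def by (subst (asm) integrable_completion) simp_all
  have left: "integrable lborel (\<lambda>x. indicator {1..} (- x) * (- x) powr (- e))"
    using lborel_integrable_real_affine[OF right, of "- 1" 0] by simp
  have middle: "integrable lborel (indicator {- 1..1} :: real \<Rightarrow> real)"
    by (rule integrable_real_indicator) auto
  define g where "g x = indicator {1..} x * x powr (- e) + indicator {1..} (- x) * (- x) powr (- e)
    + indicator {- 1..1} x" for x :: real
  have "integrable lborel g"
    unfolding g_def using right left middle by (intro Bochner_Integration.integrable_add)
  then show ?thesis
  proof (rule Bochner_Integration.integrable_bound)
    show "AE x in lborel. norm (jbracket x powr - e) \<le> norm (g x)"
    proof (rule AE_I2)
      fix x :: real
      have "jbracket x powr - e \<le> g x"
        using jbracket_powr_neg_le_abs_powr[of e x] jbracket_powr_neg_le_one[of e x] assms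
        by (cases "x \<ge> 1"; cases "x \<le> - 1") (auto simp: g_def indicator_def)
      moreover have "0 \<le> g x" by (simp add: g_def indicator_def)
      ultimately show "norm (jbracket x powr - e) \<le> norm (g x)" by simp
    qed
  qed (simp add: jbracket_def)
qed

lemma deriv_odd_if_even:
  fixes \<psi> :: "real \<Rightarrow> real"
  assumes diff: "\<And>x. \<psi> differentiable (at x)" and even: "\<And>x. \<psi> (- x) = \<psi> x"
  shows "deriv \<psi> (- x) = - deriv \<psi> x"
proof -
  have D: "\<And>y. (\<psi> has_real_derivative deriv \<psi> y) (at y)"
    using diff by (simp add: DERIV_deriv_iff_real_differentiable)
  have "((\<lambda>x. \<psi> (- x)) has_real_derivative deriv \<psi> (- x) * (- 1)) (at x)"
    by (rule DERIV_chain2[OF D]) (auto intro!: derivative_eq_intros)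
  moreover have "(\<lambda>x. \<psi> (- x)) = \<psi>" using even by auto
  ultimately have "(\<psi> has_real_derivative - deriv \<psi> (- x)) (at x)" by simp
  from DERIV_unique[OF D this] show ?thesis by simp
qed

lemma filterlim_affine_at_infinity:
  assumes "s \<noteq> 0" shows "filterlim (\<lambda>t::real. u + t * s) at_infinity at_top"
proof (cases "s > 0")
  case True
  then have "filterlim (\<lambda>t::real. u + t * s) at_top at_top" by real_asymp
  then show ?thesis using filterlim_mono[OF _ at_top_le_at_infinity order.refl] by blast
next
  case False
  with assms have "s < 0" by simp
  then have "filterlim (\<lambda>t::real. u + t * s) at_bot at_top" by real_asymp
  then show ?thesis using filterlim_mono[OF _ at_bot_le_at_infinity order.refl] by blast
qed

lemma integrable_if_jbracket_decay:
  fixes f :: "real \<Rightarrow> real"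
  assumes [measurable]: "f \<in> borel_measurable borel"
    and decay: "\<And>x. \<bar>f x\<bar> \<le> C * jbracket x powr (- e)" and "1 < e"
  shows "integrable lborel f"
proof (rule Bochner_Integration.integrable_bound)
  show "integrable lborel (\<lambda>x. C * jbracket x powr (- e))"
    using integrable_jbracket_powr_neg[OF \<open>1 < e\<close>] by simp
  show "AE x in lborel. norm (f x) \<le> norm (C * jbracket x powr (- e))"
    using order.trans[OF decay abs_ge_self] by simp
qed simp

lemma tendsto_zero_if_jbracket_decay:
  fixes f :: "real \<Rightarrow> real"
  assumes decay: "\<And>x. \<bar>f x\<bar> \<le> C * jbracket x powr (- e)" and "0 < e"
  shows "(f \<longlongrightarrow> 0) at_infinity"
proof (rule Lim_null_comparison)
  show "\<forall>\<^sub>F x in at_infinity. norm (f x) \<le> C * jbracket x powr (- e)"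
    using decay by simp
  show "((\<lambda>x. C * jbracket x powr (- e)) \<longlongrightarrow> 0) at_infinity"
    using tendsto_jbracket_powr_neg[OF \<open>0 < e\<close>] by (rule tendsto_mult_right_zero)
qed

context real_distribution
begin

interpretation MM: pair_prob_space M M ..

lemma square_integral_eq_integral_pair:
  fixes g :: "real \<Rightarrow> real"
  assumes [measurable]: "g \<in> borel_measurable borel" and bound: "\<And>x. \<bar>g x\<bar> \<le> D"
  shows "(\<integral>y. g y \<partial>M)\<^sup>2 = (\<integral>p. g (fst p) * g (snd p) \<partial>(M \<Otimes>\<^sub>M M))"
proof -
  have "integrable (M \<Otimes>\<^sub>M M) (\<lambda>p. g (fst p) * g (snd p))"
  proof (rule MM.P.integrable_const_bound[where B = "D * D"])
    show "AE p in M \<Otimes>\<^sub>M M. norm (g (fst p) * g (snd p)) \<le> D * D"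
      using bound by (auto simp: abs_mult intro!: mult_mono order.trans[OF abs_ge_zero bound])
  qed measurable
  from MM.integral_fst'[OF this]
  show ?thesis by (simp add: power2_eq_square)
qed

lemma borel_measurable_measure_singleton [measurable]: "(\<lambda>y. measure M {y}) \<in> borel_measurable borel"
proof -
  have "{p \<in> space (M \<Otimes>\<^sub>M M). fst p = snd p} \<in> sets (M \<Otimes>\<^sub>M M)"
    by measurable
  then have "{p. fst p = snd p} \<in> sets (M \<Otimes>\<^sub>M M)"
    by (simp add: space_pair_measure)
  from MM.measurable_emeasure_Pair1[OF this]
  have "(\<lambda>y. emeasure M {y}) \<in> borel_measurable M"
    by (simp add: vimage_def)
  then show ?thesis
    unfolding measure_def by measurable
qed

lemma integral_pair_diagonal:
  fixes f :: "real \<Rightarrow> real"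
  assumes [measurable]: "f \<in> borel_measurable borel" and bound: "\<And>x. \<bar>f x\<bar> \<le> D"
  shows "(\<integral>p. (if fst p = snd p then f (fst p) else 0) \<partial>(M \<Otimes>\<^sub>M M)) = (\<integral>y. f y * measure M {y} \<partial>M)"
proof -
  have "integrable (M \<Otimes>\<^sub>M M) (\<lambda>p. if fst p = snd p then f (fst p) else 0)"
    by (rule MM.P.integrable_const_bound[where B = D]) (use bound order.trans[OF abs_ge_zero bound] in auto)
  from MM.integral_fst'[OF this, symmetric]
  have "(\<integral>p. (if fst p = snd p then f (fst p) else 0) \<partial>(M \<Otimes>\<^sub>M M))
      = (\<integral>y. (\<integral>z. (if y = z then f y else 0) \<partial>M) \<partial>M)"
    by (simp only: fst_conv snd_conv)
  also have "\<dots> = (\<integral>y. (\<integral>z. f y * indicator {y} z \<partial>M) \<partial>M)"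
    by (intro Bochner_Integration.integral_cong) (auto simp: indicator_def)
  finally show ?thesis by simp
qed

lemma integral_indicator_measure_singleton:
  assumes [measurable]: "S \<in> sets borel"
  shows "(\<integral>y. indicator S y * measure M {y} \<partial>M) = (\<Sum>\<^sub>\<infinity>x\<in>S. (measure M {x})\<^sup>2)"
proof -
  define m where "m y = measure M {y}" for y
  define A where "A = {x \<in> S. m x \<noteq> 0}"
  have "countable A"
    by (rule countable_subset[OF _ countable_support]) (auto simp: A_def m_def)
  have [measurable]: "A \<in> sets M"
    by (rule sets.countable[OF _ \<open>countable A\<close>]) simp
  have m_nonneg: "0 \<le> m y" for y
    by (simp add: m_def)
  have "integrable M (\<lambda>y. indicator S y * m y)"
    by (rule integrable_const_bound[where B = 1]) (auto simp: m_def indicator_def prob_le_1)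
  then have "ennreal (\<integral>y. indicator S y * m y \<partial>M) = (\<integral>\<^sup>+y. ennreal (m y) * indicator A y \<partial>M)"
    by (subst nn_integral_eq_integral[symmetric])
       (auto simp: m_nonneg A_def indicator_def intro!: nn_integral_cong)
  also have "\<dots> = emeasure (density M m) A"
    unfolding m_def by (rule emeasure_density[symmetric]) measurable
  also have "\<dots> = (\<integral>\<^sup>+x. emeasure (density M m) {x} \<partial>count_space A)"
    using \<open>countable A\<close> by (intro emeasure_countable_singleton) auto
  also have "\<dots> = (\<integral>\<^sup>+x. ennreal ((m x)\<^sup>2) \<partial>count_space A)"
    by (intro nn_integral_cong)
       (simp add: emeasure_density emeasure_eq_measure m_def power2_eq_square ennreal_mult)
  finally have sum_eq: "(\<integral>\<^sup>+x. ennreal ((m x)\<^sup>2) \<partial>count_space A) = ennreal (\<integral>y. indicator S y * m y \<partial>M)" ..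
  then have "Infinite_Set_Sum.abs_summable_on (\<lambda>x. (m x)\<^sup>2) A"
    unfolding abs_summable_on_def integrable_iff_bounded by simp
  then have "(\<Sum>\<^sub>\<infinity>x\<in>A. (m x)\<^sup>2) = enn2real (\<integral>\<^sup>+x. ennreal ((m x)\<^sup>2) \<partial>count_space A)"
    by (simp add: infsetsum_infsum[symmetric] infsetsum_conv_nn_integral sum_eq)
  also have "\<dots> = (\<integral>y. indicator S y * m y \<partial>M)"
    unfolding sum_eq by (rule enn2real_ennreal) (simp add: m_nonneg)
  also have "(\<Sum>\<^sub>\<infinity>x\<in>A. (m x)\<^sup>2) = (\<Sum>\<^sub>\<infinity>x\<in>S. (m x)\<^sup>2)"
    by (rule infsum_cong_neutral) (auto simp: A_def)
  finally show ?thesis by (simp add: m_def)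
qed

end

locale wavelet_energy = real_distribution M for M :: "real measure" +
  fixes h :: "real \<Rightarrow> real" and c d B :: real
  assumes interval: "c < d"
    and measurable_h [measurable]: "h \<in> borel_measurable borel"
    and bounded_h: "\<And>x. \<bar>h x\<bar> \<le> B"
    and integrable_h: "integrable lborel h"
    and even_h: "\<And>x. h (- x) = h x"
    and tendsto_h: "(h \<longlongrightarrow> 0) at_infinity"
begin

interpretation MM: pair_prob_space M M ..

interpretation MML: pair_sigma_finite "M \<Otimes>\<^sub>M M" lborel
  by (intro pair_sigma_finite.intro MM.P.sigma_finite_measure_axioms lborel.sigma_finite_measure_axioms)

lemma bound_nonneg: "0 \<le> B"
  using bounded_h[of 0] by linarith

lemma abs_mult_shifted_product_le:
  assumes "\<bar>g\<bar> \<le> 1"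
  shows "\<bar>g * (h u * h (u + s))\<bar> \<le> B * \<bar>h u\<bar>"
proof -
  have "\<bar>g\<bar> * (\<bar>h u\<bar> * \<bar>h (u + s)\<bar>) \<le> 1 * (\<bar>h u\<bar> * B)"
    using assms by (intro mult_mono bounded_h mult_left_mono) auto
  then show ?thesis by (simp add: abs_mult mult_ac)
qed

lemma integrable_mult_shifted_product:
  assumes [measurable]: "g \<in> borel_measurable borel" and "\<And>u. \<bar>g u\<bar> \<le> 1"
  shows "integrable lborel (\<lambda>u. g u * (h u * h (u + s)))"
proof (rule Bochner_Integration.integrable_bound)
  show "integrable lborel (\<lambda>u. B * \<bar>h u\<bar>)"
    using integrable_h by simp
  show "AE u in lborel. norm (g u * (h u * h (u + s))) \<le> norm (B * \<bar>h u\<bar>)"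
  proof (rule AE_I2)
    fix u
    have "\<bar>g u * (h u * h (u + s))\<bar> \<le> B * \<bar>h u\<bar>"
      using assms(2) by (rule abs_mult_shifted_product_le)
    then show "norm (g u * (h u * h (u + s))) \<le> norm (B * \<bar>h u\<bar>)"
      using bound_nonneg by simp
  qed
qed measurable

definition energy_kernel :: "real \<Rightarrow> real \<Rightarrow> real \<Rightarrow> real" where
  "energy_kernel t y z = (\<integral>u. indicator {c<..<d} (y + u / t) * (h u * h (u + t * (y - z))) \<partial>lborel)"

lemma integrable_energy_kernel_integrand:
  "integrable lborel (\<lambda>u. indicator {c<..<d} (y + u / t) * (h u * h (u + t * (y - z))))"
  by (rule integrable_mult_shifted_product) (auto simp: indicator_def)

lemma measurable_energy_kernel [measurable]:
  "(\<lambda>p. energy_kernel t (fst p) (snd p)) \<in> borel_measurable (M \<Otimes>\<^sub>M M)"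
  unfolding energy_kernel_def by measurable

lemma abs_energy_kernel_le: "\<bar>energy_kernel t y z\<bar> \<le> B * (\<integral>u. \<bar>h u\<bar> \<partial>lborel)"
proof -
  have "\<bar>energy_kernel t y z\<bar>
      \<le> (\<integral>u. \<bar>indicator {c<..<d} (y + u / t) * (h u * h (u + t * (y - z)))\<bar> \<partial>lborel)"
    unfolding energy_kernel_def by (rule integral_abs_bound)
  also have "\<dots> \<le> (\<integral>u. B * \<bar>h u\<bar> \<partial>lborel)"
  proof (rule integral_mono)
    show "integrable lborel (\<lambda>u. \<bar>indicator {c<..<d} (y + u / t) * (h u * h (u + t * (y - z)))\<bar>)"
      using integrable_energy_kernel_integrand by (rule integrable_abs)
    show "integrable lborel (\<lambda>u. B * \<bar>h u\<bar>)"
      using integrable_h by simp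
    show "\<bar>indicator {c<..<d} (y + u / t) * (h u * h (u + t * (y - z)))\<bar> \<le> B * \<bar>h u\<bar>" for u
      by (rule abs_mult_shifted_product_le) (simp add: indicator_def)
  qed
  finally show ?thesis by simp
qed

lemma energy_kernel_eq_integral:
  assumes "0 < t"
  shows "energy_kernel t y z = t * (\<integral>b. indicator {c<..<d} b * (h ((b - y) * t) * h ((b - z) * t)) \<partial>lborel)"
proof -
  define F where "F b = indicator {c<..<d} b * (h ((b - y) * t) * h ((b - z) * t))" for b
  have "(\<integral>b. F b \<partial>lborel) = 1 / t * (\<integral>u. F (y + u / t) \<partial>lborel)"
    using assms lborel_integral_real_affine[where c = "1 / t" and t = y and f = F] by simp
  moreover have "F (y + u / t) = indicator {c<..<d} (y + u / t) * (h u * h (u + t * (y - z)))" for u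
  proof -
    have "(y + u / t - y) * t = u" "(y + u / t - z) * t = u + t * (y - z)"
      using assms by (simp_all add: field_simps)
    then show ?thesis by (simp add: F_def)
  qed
  ultimately show ?thesis
    using assms by (simp add: energy_kernel_def F_def[symmetric])
qed

lemma wavelet_transform_inverse_square:
  "(wavelet_transform h M b (inverse t))\<^sup>2
    = t\<^sup>2 * (\<integral>p. h ((b - fst p) * t) * h ((b - snd p) * t) \<partial>(M \<Otimes>\<^sub>M M))"
proof -
  have "(wavelet_transform h M b (inverse t))\<^sup>2 = t\<^sup>2 * (\<integral>y. h ((b - y) * t) \<partial>M)\<^sup>2"
    unfolding wavelet_transform_def by (simp add: power_mult_distrib divide_inverse)
  also have "(\<integral>y. h ((b - y) * t) \<partial>M)\<^sup>2 = (\<integral>p. h ((b - fst p) * t) * h ((b - snd p) * t) \<partial>(M \<Otimes>\<^sub>M M))"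
    by (rule square_integral_eq_integral_pair[where D = B]) (auto intro: bounded_h)
  finally show ?thesis .
qed

lemma integrable_wavelet_pair_integrand:
  "integrable ((M \<Otimes>\<^sub>M M) \<Otimes>\<^sub>M lborel)
    (\<lambda>(p, b). indicator {c<..<d} b * (h ((b - fst p) * t) * h ((b - snd p) * t)))"
proof (rule Bochner_Integration.integrable_bound)
  have "space (M \<Otimes>\<^sub>M M) \<times> {c<..<d} \<in> sets ((M \<Otimes>\<^sub>M M) \<Otimes>\<^sub>M lborel)"
    by (intro pair_measureI sets.top) simp
  moreover have "emeasure ((M \<Otimes>\<^sub>M M) \<Otimes>\<^sub>M lborel) (space (M \<Otimes>\<^sub>M M) \<times> {c<..<d}) < \<infinity>"
    using interval
    by (subst lborel.emeasure_pair_measure_Times)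
       (rule sets.top, simp_all add: MM.P.emeasure_space_1 ennreal_mult_less_top)
  ultimately show "integrable ((M \<Otimes>\<^sub>M M) \<Otimes>\<^sub>M lborel) (\<lambda>q. B\<^sup>2 * indicator (UNIV \<times> {c<..<d}) q)"
    by (simp add: integrable_real_indicator space_pair_measure)
  show "AE q in (M \<Otimes>\<^sub>M M) \<Otimes>\<^sub>M lborel.
      norm ((\<lambda>(p, b). indicator {c<..<d} b * (h ((b - fst p) * t) * h ((b - snd p) * t))) q)
      \<le> norm (B\<^sup>2 * indicator (UNIV \<times> {c<..<d}) q)"
  proof (rule AE_I2, clarify)
    fix p b
    have "\<bar>h ((b - fst p) * t) * h ((b - snd p) * t)\<bar> \<le> B * B"
      unfolding abs_mult by (intro mult_mono bounded_h) (auto simp: bound_nonneg)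
    then show "norm (indicator {c<..<d} b * (h ((b - fst p) * t) * h ((b - snd p) * t)))
        \<le> norm (B\<^sup>2 * indicator (UNIV \<times> {c<..<d}) (p, b))"
      by (auto simp: indicator_def abs_mult power2_eq_square)
  qed
qed simp

lemma scaled_energy_eq_integral_energy_kernel:
  assumes "0 < t"
  shows "inverse t * (LINT b:{c<..<d}|lborel. (wavelet_transform h M b (inverse t))\<^sup>2)
    = (\<integral>p. energy_kernel t (fst p) (snd p) \<partial>(M \<Otimes>\<^sub>M M))"
proof -
  define G where "G p b = indicator {c<..<d} b * (h ((b - fst p) * t) * h ((b - snd p) * t))" for p b
  have "(LINT b:{c<..<d}|lborel. (wavelet_transform h M b (inverse t))\<^sup>2)
      = t\<^sup>2 * (\<integral>b. (\<integral>p. G p b \<partial>(M \<Otimes>\<^sub>M M)) \<partial>lborel)"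
    unfolding set_lebesgue_integral_def wavelet_transform_inverse_square G_def
    by (simp add: mult_ac flip: integral_mult_right_zero)
  also have "(\<integral>b. (\<integral>p. G p b \<partial>(M \<Otimes>\<^sub>M M)) \<partial>lborel) = (\<integral>p. (\<integral>b. G p b \<partial>lborel) \<partial>(M \<Otimes>\<^sub>M M))"
    unfolding G_def by (rule MML.Fubini_integral[OF integrable_wavelet_pair_integrand])
  also have "(\<lambda>p. \<integral>b. G p b \<partial>lborel) = (\<lambda>p. inverse t * energy_kernel t (fst p) (snd p))"
    using assms by (simp add: G_def energy_kernel_eq_integral field_simps)
  finally show ?thesis
    using assms by (simp add: power2_eq_square)
qed

lemma energy_kernel_tendsto:
  assumes [measurable]: "f \<in> borel_measurable borel"
    and lim: "\<And>u. ((\<lambda>t. indicator {c<..<d} (y + u / t) * h (u + t * (y - z))) \<longlongrightarrow> f u) at_top"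
  shows "((\<lambda>t. energy_kernel t y z) \<longlongrightarrow> (\<integral>u. h u * f u \<partial>lborel)) at_top"
  unfolding energy_kernel_def
proof (rule integral_dominated_convergence_at_top[where w = "\<lambda>u. B * \<bar>h u\<bar>"])
  show "integrable lborel (\<lambda>u. B * \<bar>h u\<bar>)"
    using integrable_h by simp
  show "AE u in lborel. ((\<lambda>t. indicator {c<..<d} (y + u / t) * (h u * h (u + t * (y - z))))
      \<longlongrightarrow> h u * f u) at_top"
    using lim by (intro AE_I2) (simp add: mult.left_commute[of _ "h _"] tendsto_mult_left)
  show "\<forall>\<^sub>F t in at_top. AE u in lborel.
      norm (indicator {c<..<d} (y + u / t) * (h u * h (u + t * (y - z))) :: real) \<le> B * \<bar>h u\<bar>"
    by (intro always_eventually allI AE_I2)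
       (simp only: real_norm_def, rule abs_mult_shifted_product_le, simp add: indicator_def)
qed measurable

lemma energy_kernel_tendsto_off_diagonal:
  assumes "y \<noteq> z"
  shows "((\<lambda>t. energy_kernel t y z) \<longlongrightarrow> 0) at_top"
proof -
  have "((\<lambda>t. indicator {c<..<d} (y + u / t) * h (u + t * (y - z))) \<longlongrightarrow> 0) at_top" for u
  proof (rule Lim_null_comparison)
    show "\<forall>\<^sub>F t in at_top. norm (indicator {c<..<d} (y + u / t) * h (u + t * (y - z)) :: real)
        \<le> \<bar>h (u + t * (y - z))\<bar>"
      by (simp add: indicator_def)
    show "((\<lambda>t. \<bar>h (u + t * (y - z))\<bar>) \<longlongrightarrow> 0) at_top"
      using filterlim_compose[OF tendsto_h filterlim_affine_at_infinity] assms
      by (intro tendsto_rabs_zero) simp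
  qed
  from energy_kernel_tendsto[OF _ this] show ?thesis
    by simp
qed

definition boundary_profile :: "real \<Rightarrow> real \<Rightarrow> real" where
  "boundary_profile y u =
    (if y \<in> {c<..<d} then 1 else if y = c then indicator {0<..} u else if y = d then indicator {..<0} u else 0)"

definition interval_weight :: "real \<Rightarrow> real" where
  "interval_weight y = (if y \<in> {c<..<d} then 1 else if y = c \<or> y = d then 1 / 2 else 0)"

lemma measurable_interval_weight [measurable]: "interval_weight \<in> borel_measurable borel"
  unfolding interval_weight_def by measurable

lemma eventually_indicator_eq_boundary_profile:
  "\<forall>\<^sub>F t in at_top. indicator {c<..<d} (y + u / t) = boundary_profile y u"
proof -
  have lim: "((\<lambda>t. y + u / t) \<longlongrightarrow> y) at_top"
    by real_asymp
  have above: "\<forall>\<^sub>F t in at_top. a < y + u / t" if "a < y" for a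
    using order_tendstoD(1)[OF lim that] .
  have below: "\<forall>\<^sub>F t in at_top. y + u / t < a" if "y < a" for a
    using order_tendstoD(2)[OF lim that] .
  have pos: "\<forall>\<^sub>F t in at_top. 0 < (t::real)"
    by (rule eventually_gt_at_top)
  consider "y < c" | "y = c" | "c < y" "y < d" | "y = d" | "d < y"
    by linarith
  then show ?thesis
  proof cases
    case 1
    from below[OF 1] show ?thesis
      by (rule eventually_mono) (use 1 interval in \<open>auto simp: boundary_profile_def\<close>)
  next
    case 2
    with interval have "y < d" by simp
    from pos below[OF this] show ?thesis
      by eventually_elim
        (use 2 interval in \<open>auto simp: boundary_profile_def indicator_def divide_pos_pos
          divide_nonpos_pos not_less\<close>)
  next
    case 3
    from above[OF 3(1)] below[OF 3(2)] show ?thesis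
      by eventually_elim (use 3 in \<open>auto simp: boundary_profile_def\<close>)
  next
    case 4
    with interval have "c < y" by simp
    from pos above[OF this] show ?thesis
      by eventually_elim
        (use 4 interval in \<open>auto simp: boundary_profile_def indicator_def divide_neg_pos
          divide_nonneg_pos not_less\<close>)
  next
    case 5
    from above[OF 5] show ?thesis
      by (rule eventually_mono) (use 5 interval in \<open>auto simp: boundary_profile_def\<close>)
  qed
qed

definition energy :: real where
  "energy = (\<integral>u. (h u)\<^sup>2 \<partial>lborel)"

lemma integral_half_line_energy:
  "(\<integral>u. indicator {0<..} u * (h u * h u) \<partial>lborel) = energy / 2"
  "(\<integral>u. indicator {..<0} u * (h u * h u) \<partial>lborel) = energy / 2"
proof -
  have right: "integrable lborel (\<lambda>u. indicator {0<..} u * (h u * h u) :: real)"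
    using integrable_mult_shifted_product[of "indicator {0<..}" 0] by (simp add: indicator_def)
  have left: "integrable lborel (\<lambda>u. indicator {..<0} u * (h u * h u) :: real)"
    using integrable_mult_shifted_product[of "indicator {..<0}" 0] by (simp add: indicator_def)
  have reflect: "(\<integral>u. indicator {..<0} u * (h u * h u) \<partial>lborel) = (\<integral>u. indicator {0<..} u * (h u * h u) \<partial>lborel)"
    using lborel_integral_real_affine[of "- 1" "\<lambda>u. indicator {..<0} u * (h u * h u) :: real" 0]
    by (simp add: even_h indicator_def)
  have "energy
      = (\<integral>u. indicator {0<..} u * (h u * h u) + indicator {..<0} u * (h u * h u) \<partial>lborel)"
    unfolding energy_def
  proof (rule integral_cong_AE)
    show "AE u in lborel. (h u)\<^sup>2 = indicator {0<..} u * (h u * h u) + indicator {..<0} u * (h u * h u)"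
      using AE_lborel_singleton[of 0] by eventually_elim (auto simp: indicator_def power2_eq_square)
  qed measurable
  also have "\<dots> = 2 * (\<integral>u. indicator {0<..} u * (h u * h u) \<partial>lborel)"
    using reflect by (simp add: Bochner_Integration.integral_add[OF right left])
  finally show "(\<integral>u. indicator {0<..} u * (h u * h u) \<partial>lborel) = energy / 2"
    by simp
  with reflect show "(\<integral>u. indicator {..<0} u * (h u * h u) \<partial>lborel) = energy / 2"
    by simp
qed

lemma integral_boundary_profile:
  "(\<integral>u. h u * (boundary_profile y u * h u) \<partial>lborel) = energy * interval_weight y"
  using interval
  by (auto simp: boundary_profile_def interval_weight_def energy_def power2_eq_square
    mult.left_commute[of "h _"] integral_half_line_energy)

lemma energy_kernel_tendsto_diagonal:
  "((\<lambda>t. energy_kernel t y y) \<longlongrightarrow> energy * interval_weight y) at_top"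
proof -
  have "((\<lambda>t. indicator {c<..<d} (y + u / t) * h (u + t * (y - y))) \<longlongrightarrow> boundary_profile y u * h u) at_top" for u
    using eventually_indicator_eq_boundary_profile[of y u]
    by (intro tendsto_eventually) (auto elim: eventually_mono)
  from energy_kernel_tendsto[OF _ this] show ?thesis
    unfolding integral_boundary_profile by (simp add: boundary_profile_def)
qed

definition atom_energy :: real where
  "atom_energy =
    (\<Sum>\<^sub>\<infinity>x\<in>{c<..<d}. (measure M {x})\<^sup>2) + 1 / 2 * ((measure M {c})\<^sup>2 + (measure M {d})\<^sup>2)"

lemma integral_interval_weight: "(\<integral>y. interval_weight y * measure M {y} \<partial>M) = atom_energy"
proof -
  define m where "m y = measure M {y}" for y
  have [measurable]: "m \<in> borel_measurable M"
    unfolding m_def by measurable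
  have interior: "integrable M (\<lambda>y. indicator {c<..<d} y * m y)"
    by (rule integrable_const_bound[where B = 1]) (auto simp: m_def indicator_def prob_le_1)
  have endpoint: "integrable M (\<lambda>y. 1 / 2 * m x * indicator {x} y)" for x
    by (intro integrable_mult_right integrable_real_indicator) (auto simp: less_top[symmetric])
  have "(\<integral>y. interval_weight y * m y \<partial>M)
      = (\<integral>y. indicator {c<..<d} y * m y
          + (1 / 2 * m c * indicator {c} y + 1 / 2 * m d * indicator {d} y) \<partial>M)"
    using interval
    by (intro Bochner_Integration.integral_cong) (auto simp: interval_weight_def indicator_def)
  also have "\<dots> = (\<integral>y. indicator {c<..<d} y * m y \<partial>M) + 1 / 2 * ((m c)\<^sup>2 + (m d)\<^sup>2)"
    using interior endpoint
    by (simp add: m_def power2_eq_square algebra_simps)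
  finally show ?thesis
    by (simp add: m_def atom_energy_def integral_indicator_measure_singleton)
qed

lemma integral_energy_kernel_tendsto:
  "((\<lambda>t. \<integral>p. energy_kernel t (fst p) (snd p) \<partial>(M \<Otimes>\<^sub>M M)) \<longlongrightarrow> energy * atom_energy) at_top"
proof -
  define L where "L p = (if fst p = snd p then energy * interval_weight (fst p) else 0)"
    for p :: "real \<times> real"
  have "((\<lambda>t. \<integral>p. energy_kernel t (fst p) (snd p) \<partial>(M \<Otimes>\<^sub>M M)) \<longlongrightarrow> (\<integral>p. L p \<partial>(M \<Otimes>\<^sub>M M)))
      at_top"
  proof (rule integral_dominated_convergence_at_top[where w = "\<lambda>_. B * (\<integral>u. \<bar>h u\<bar> \<partial>lborel)"])
    show "AE p in M \<Otimes>\<^sub>M M. ((\<lambda>t. energy_kernel t (fst p) (snd p)) \<longlongrightarrow> L p) at_top"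
      by (intro AE_I2)
        (auto simp: L_def energy_kernel_tendsto_diagonal energy_kernel_tendsto_off_diagonal)
    show "\<forall>\<^sub>F t in at_top. AE p in M \<Otimes>\<^sub>M M.
        norm (energy_kernel t (fst p) (snd p)) \<le> B * (\<integral>u. \<bar>h u\<bar> \<partial>lborel)"
      by (simp add: abs_energy_kernel_le)
  qed (simp_all add: L_def)
  also have "(\<integral>p. L p \<partial>(M \<Otimes>\<^sub>M M)) = (\<integral>y. energy * interval_weight y * measure M {y} \<partial>M)"
    unfolding L_def
    by (rule integral_pair_diagonal[where D = "\<bar>energy\<bar>"]) (auto simp: interval_weight_def abs_mult)
  also have "\<dots> = energy * atom_energy"
    by (simp add: mult.assoc integral_interval_weight)
  finally show ?thesis .
qed

lemma scaled_energy_tendsto: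
  "((\<lambda>a. a * (LINT b:{c<..<d}|lborel. (wavelet_transform h M b a)\<^sup>2)) \<longlongrightarrow> energy * atom_energy)
    (at_right 0)"
  unfolding filterlim_at_right_to_top
proof (rule Lim_transform_eventually[OF integral_energy_kernel_tendsto])
  show "\<forall>\<^sub>F t in at_top. (\<integral>p. energy_kernel t (fst p) (snd p) \<partial>(M \<Otimes>\<^sub>M M))
      = inverse t * (LINT b:{c<..<d}|lborel. (wavelet_transform h M b (inverse t))\<^sup>2)"
    using eventually_gt_at_top[of 0]
    by eventually_elim (simp add: scaled_energy_eq_integral_energy_kernel)
qed

end

theorem theorem2p8:
  fixes \<psi> :: "real \<Rightarrow> real" and M :: "real measure" and c d :: real
  assumes diff: "\<And>x. \<psi> differentiable (at x)"
    and cont_deriv: "continuous_on UNIV (deriv \<psi>)"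
    and psi0: "\<psi> 0 = 1"
    and even: "\<And>x. \<psi> (- x) = \<psi> x"
    and decay: "\<exists>C>0. \<exists>\<delta>>1. \<forall>x. \<bar>\<psi> x\<bar> + \<bar>x * deriv \<psi> x\<bar> \<le> C * jbracket x powr (- \<delta>)"
    and A_nonzero: "(\<integral>x. \<psi> x \<partial>lborel) \<noteq> 0"
    and prob: "prob_space M"
    and sets_M: "sets M = sets borel"
    and cd: "c < d"
  shows "((\<lambda>a. a * (LINT b:{c<..<d}|lborel.
              (wavelet_transform (\<lambda>x. \<psi> x + x * deriv \<psi> x) M b a)\<^sup>2))
          \<longlongrightarrow> (\<integral>x. \<bar>\<psi> x + x * deriv \<psi> x\<bar>\<^sup>2 \<partial>lborel) *
                ((\<Sum>\<^sub>\<infinity>x\<in>{c<..<d}. (measure M {x})\<^sup>2)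
                 + 1/2 * ((measure M {c})\<^sup>2 + (measure M {d})\<^sup>2)))
         (at_right 0)"
proof -
  obtain C \<delta> where "0 < C" "1 < \<delta>"
    and bound: "\<And>x. \<bar>\<psi> x\<bar> + \<bar>x * deriv \<psi> x\<bar> \<le> C * jbracket x powr (- \<delta>)"
    using decay by blast
  define h where "h x = \<psi> x + x * deriv \<psi> x" for x
  have h_decay: "\<bar>h x\<bar> \<le> C * jbracket x powr (- \<delta>)" for x
    using bound[of x] by (simp add: h_def)
  have "continuous_on UNIV \<psi>"
    using diff by (intro continuous_at_imp_continuous_on ballI differentiable_imp_continuous_within) auto
  then have h_measurable: "h \<in> borel_measurable borel"
    unfolding h_def[abs_def] using cont_deriv by (intro borel_measurable_continuous_onI continuous_intros)
  interpret wavelet_energy M h c d C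
  proof (intro wavelet_energy.intro wavelet_energy_axioms.intro)
    show "real_distribution M"
      using prob sets_M by (intro real_distribution.intro real_distribution_axioms.intro)
    show "\<bar>h x\<bar> \<le> C" for x
      using \<open>0 < C\<close> \<open>1 < \<delta>\<close>
      by (intro order.trans[OF h_decay mult_left_le[OF jbracket_powr_neg_le_one]]) auto
    show "h (- x) = h x" for x
      using deriv_odd_if_even[OF diff even] even by (simp add: h_def)
    show "integrable lborel h"
      using h_measurable h_decay \<open>1 < \<delta>\<close> by (rule integrable_if_jbracket_decay)
    show "(h \<longlongrightarrow> 0) at_infinity"
      using h_decay \<open>1 < \<delta>\<close> by (intro tendsto_zero_if_jbracket_decay) auto
  qed (simp_all add: cd h_measurable)
  from scaled_energy_tendsto show ?thesis
    unfolding energy_def atom_energy_def unfolding h_def[abs_def] by simp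
qed

end
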